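(* Let $d,L$ be positive integers. For all nonnegative integers $n,m$ there is a bijection between (1) fillings of the rectangular Young diagram with $n$ rows and $m$ columns that avoid the pattern $d\cdots1(d+1)$ and contain no NE-chain of length greater than $L$, and (2) pairs $(P,Q)$ with $P=(\lambda^{(0)},\ldots,\lambda^{(n)})$ and $Q=(\mu^{(0)},\ldots,\mu^{(m)})$ $(d,L)$-cylindric semistandard Young tableaux with common shape $\lambda^{(n)}=\mu^{(m)}$, such that if a filling corresponds to $(P,Q)$ then the sum of the entries in the $i$-th row equals $\mathrm{wt}(P)_i$ for each $i$, the sum of entries in the $j$-th column equals $\mathrm{wt}(Q)_j$ for each $j$, and the reflection of the filling across the line $y=x$ (a filling of the rectangle with $m$ rows and $n$ columns) corresponds to $(Q,P)$.
   Context: Partitions: finite weakly decreasing sequences of positive integers, $\lambda_i=0$ for $i>\ell(\lambda)$, $|\lambda|=\sum\lambda_i$; a $d$-partition has $\ell\le d$. For $d$-partitions, $\alpha\prec_{(d,L)}\beta$ means $\beta_1\ge\alpha_1\ge\beta_2\ge\alpha_2\ge\cdots\ge\beta_d\ge\alpha_d\ge\beta_1-L$. A $(d,L)$-cylindric semistandard Young tableau is a sequence of $d$-partitions $\emptyset=\lambda^{(0)}\prec_{(d,L)}\lambda^{(1)}\prec_{(d,L)}\cdots\prec_{(d,L)}\lambda^{(k)}$; its shape is $\lambda^{(k)}$ and its weight is the vector with $\mathrm{wt}(T)_i=|\lambda^{(i)}|-|\lambda^{(i-1)}|$, $1\le i\le k$. Young diagrams lie in the first quadrant with unit cells, rows numbered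 upward from the $x$-axis and columns rightward from the $y$-axis; a filling assigns nonnegative integers to cells. A NE-chain is a sequence of cells with nonzero entries, each weakly above and weakly right of the previous; its length is the sum of entries. A filling contains $d\cdots1(d+1)$ if there are cells $c_1,\dots,c_{d+1}$ with nonzero entries, each $c_{i+1}$ ($i<d$) strictly below and strictly right of $c_i$, and $c_{d+1}$ strictly above and strictly right of all of $c_1,\dots,c_d$; otherwise it avoids it. *)

theory Defs
  imports Main
begin

type_synonym filling = "nat \<Rightarrow> nat \<Rightarrow> nat"
  \<comment> \<open>f i j = entry of the cell in row i (counted upward from 1) and column j (counted rightward from 1)\<close>

type_synonym cell = "nat \<times> nat"  \<comment> \<open>(row, column)\<close>

definition is_filling :: "nat \<Rightarrow> nat \<Rightarrow> filling \<Rightarrow> bool" where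
  "is_filling n m f \<longleftrightarrow> (\<forall>i j. f i j \<noteq> 0 \<longrightarrow> 1 \<le> i \<and> i \<le> n \<and> 1 \<le> j \<and> j \<le> m)"

definition entry :: "filling \<Rightarrow> cell \<Rightarrow> nat" where
  "entry f c = f (fst c) (snd c)"

definition reflect :: "filling \<Rightarrow> filling" where
  "reflect f = (\<lambda>i j. f j i)"

definition ne_chain :: "filling \<Rightarrow> cell list \<Rightarrow> bool" where
  "ne_chain f cs \<longleftrightarrow> distinct cs \<and> (\<forall>c \<in> set cs. entry f c \<noteq> 0) \<and>
     (\<forall>k. Suc k < length cs \<longrightarrow> fst (cs ! k) \<le> fst (cs ! Suc k) \<and> snd (cs ! k) \<le> snd (cs ! Suc k))"

definition chain_length :: "filling \<Rightarrow> cell list \<Rightarrow> nat" where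
  "chain_length f cs = sum_list (map (entry f) cs)"

definition contains_pattern :: "nat \<Rightarrow> filling \<Rightarrow> bool" where
  "contains_pattern d f \<longleftrightarrow> (\<exists>c :: nat \<Rightarrow> cell.
     (\<forall>i \<in> {1..d+1}. entry f (c i) \<noteq> 0) \<and>
     (\<forall>i \<in> {1..<d}. fst (c (i+1)) < fst (c i) \<and> snd (c i) < snd (c (i+1))) \<and>
     (\<forall>i \<in> {1..d}. fst (c i) < fst (c (d+1)) \<and> snd (c i) < snd (c (d+1))))"

definition admissible_fillings :: "nat \<Rightarrow> nat \<Rightarrow> nat \<Rightarrow> nat \<Rightarrow> filling set" where
  "admissible_fillings d L n m = {f. is_filling n m f \<and> \<not> contains_pattern d f \<and>
      (\<forall>cs. ne_chain f cs \<longrightarrow> chain_length f cs \<le> L)}"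

text \<open>A d-partition is represented as the list [lambda_1, ..., lambda_d] (padded with zeros).\<close>
definition is_dpart :: "nat \<Rightarrow> nat list \<Rightarrow> bool" where
  "is_dpart d lam \<longleftrightarrow> length lam = d \<and> sorted_wrt (\<ge>) lam"

definition cyl_prec :: "nat \<Rightarrow> nat \<Rightarrow> nat list \<Rightarrow> nat list \<Rightarrow> bool" where
  "cyl_prec d L \<alpha> \<beta> \<longleftrightarrow> is_dpart d \<alpha> \<and> is_dpart d \<beta> \<and>
     (\<forall>i < d. \<alpha> ! i \<le> \<beta> ! i) \<and>
     (\<forall>i. Suc i < d \<longrightarrow> \<beta> ! Suc i \<le> \<alpha> ! i) \<and>
     int (\<beta> ! 0) - int L \<le> int (\<alpha> ! (d - 1))"

text \<open>A cylindric SSYT (lambda0, ..., lambdak) is the list of its partitions, of length k+1.\<close>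
definition cyl_ssyt :: "nat \<Rightarrow> nat \<Rightarrow> nat list list \<Rightarrow> bool" where
  "cyl_ssyt d L T \<longleftrightarrow> T \<noteq> [] \<and> T ! 0 = replicate d 0 \<and>
     (\<forall>i. Suc i < length T \<longrightarrow> cyl_prec d L (T ! i) (T ! Suc i))"

definition shape :: "nat list list \<Rightarrow> nat list" where
  "shape T = last T"

definition wt :: "nat list list \<Rightarrow> nat \<Rightarrow> int" where
  "wt T i = int (sum_list (T ! i)) - int (sum_list (T ! (i - 1)))"

definition tableau_pairs :: "nat \<Rightarrow> nat \<Rightarrow> nat \<Rightarrow> nat \<Rightarrow> (nat list list \<times> nat list list) set" where
  "tableau_pairs d L n m = {(P, Q). cyl_ssyt d L P \<and> length P = n + 1 \<and>
      cyl_ssyt d L Q \<and> length Q = m + 1 \<and> shape P = shape Q}"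

end

theory Submission
  imports Defs
begin

(* The bijection is a growth diagram. The corner (i, j) of the grid gets the d-partition
   growth f i j, obtained from the labels kappa, mu, nu at (i-1, j-1), (i-1, j), (i, j-1) and
   the entry x = f i j by the local rule grow: part k of the new label is
   max (mu_k, nu_k) + min (mu_(k-1), nu_(k-1)) - kappa_(k-1), with the index k - 1 read cyclically
   and x added to part 0. The labels along the right and the top edge form (P, Q).

   The rule is symmetric in mu and nu, which gives the reflection property; it satisfies
   |rho| + |kappa| = |mu| + |nu| + x, which gives the weights; and as long as the labels interlace
   cylindrically it can be run backwards (ungrow, ungrow_entry), so the boundary determines the
   whole diagram, which gives the bijection.

   The labels interlace iff at every cell kappa_(d-1) = 0 whenever x > 0, and
   rho_0 <= min (mu_(d-1), nu_(d-1)) + L. This local condition is exactly admissibility of the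
   filling. While last parts vanish, part k of a label is the maximal NE-chain weight of the
   k-th derived filling (derived), and deriving shortens SE-chains by exactly one. Hence the last
   part at (p, q) vanishes iff no SE-chain of length d lies in [1..p] x [1..q], which excludes
   the pattern d...1(d+1); and then rho_0 is the maximal NE-chain weight plus
   min (mu_(d-1), nu_(d-1)), which bounds chains by L. *)

section \<open>Maximal NE-chains and derived fillings\<close>

fun max_chain :: "filling \<Rightarrow> nat \<Rightarrow> nat \<Rightarrow> nat" where
  "max_chain g 0 j = 0"
| "max_chain g (Suc i) 0 = 0"
| "max_chain g (Suc i) (Suc j) = max (max_chain g i (Suc j)) (max_chain g (Suc i) j) + g (Suc i) (Suc j)"

lemma max_chain_0_right [simp]: "max_chain g i 0 = 0"
  by (cases i) auto

lemma max_chain_rec: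
  "0 < i \<Longrightarrow> 0 < j \<Longrightarrow> max_chain g i j = max (max_chain g (i-1) j) (max_chain g i (j-1)) + g i j"
  by (cases i; cases j) auto

lemma max_chain_mono:
  assumes "i \<le> i'" "j \<le> j'"
  shows "max_chain g i j \<le> max_chain g i' j'"
proof -
  have "max_chain g i j \<le> max_chain g i' j"
    by (rule lift_Suc_mono_le[OF _ assms(1)]) (cases j; simp)
  also have "\<dots> \<le> max_chain g i' j'"
    by (rule lift_Suc_mono_le[OF _ assms(2)]) (cases i'; simp)
  finally show ?thesis .
qed

lemma max_chain_pos_iff:
  "0 < max_chain g p q \<longleftrightarrow> (\<exists>a b. 1 \<le> a \<and> a \<le> p \<and> 1 \<le> b \<and> b \<le> q \<and> g a b \<noteq> 0)"
proof (induction g p q rule: max_chain.induct)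
  case (3 g i j)
  then show ?case
    by (simp only: max_chain.simps) (auto simp: le_Suc_eq)
qed auto

lemma max_chain_skip_zero_column:
  assumes "e \<le> p" "0 < q" "\<forall>a. e < a \<and> a \<le> p \<longrightarrow> g a q = 0"
  shows "max_chain g p q = max (max_chain g p (q-1)) (max_chain g e q)"
  using assms
proof (induction p rule: dec_induct)
  case base
  then show ?case using max_chain_mono[of e e "q-1" q g] by auto
next
  case (step p)
  then have "max_chain g (Suc p) q = max (max_chain g p q) (max_chain g (Suc p) (q-1))"
    using max_chain_rec[of "Suc p" q g] by simp
  then show ?case using step max_chain_mono[of p "Suc p" "q-1" "q-1" g] by (auto simp: max_def)
qed

lemma max_chain_skip_zero_row:
  assumes "e \<le> q" "0 < p" "\<forall>b. e < b \<and> b \<le> q \<longrightarrow> g p b = 0"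
  shows "max_chain g p q = max (max_chain g (p-1) q) (max_chain g p e)"
  using assms
proof (induction q rule: dec_induct)
  case base
  then show ?case using max_chain_mono[of "p-1" p e e g] by auto
next
  case (step q)
  then have "max_chain g p (Suc q) = max (max_chain g (p-1) (Suc q)) (max_chain g p q)"
    using max_chain_rec[of p "Suc q" g] by simp
  then show ?case using step max_chain_mono[of "p-1" "p-1" q "Suc q" g] by (auto simp: max_def)
qed

definition derived :: "filling \<Rightarrow> filling" where
  "derived g i j = (if i = 0 \<or> j = 0 then 0
     else min (max_chain g (i-1) j) (max_chain g i (j-1)) - max_chain g (i-1) (j-1))"

lemma derived_Suc_Suc:
  "derived g (Suc i) (Suc j) = min (max_chain g i (Suc j)) (max_chain g (Suc i) j) - max_chain g i j"
  by (simp add: derived_def)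

lemma derived_nonzeroD:
  "derived g i j \<noteq> 0 \<Longrightarrow> 0 < i \<and> 0 < j \<and>
     max_chain g (i-1) (j-1) < max_chain g (i-1) j \<and> max_chain g (i-1) (j-1) < max_chain g i (j-1)"
  unfolding derived_def by (auto split: if_splits)

lemma se_pair_imp_derived_nonzero:
  assumes nw: "g r c \<noteq> 0" and se: "g r' c' \<noteq> 0" and "1 \<le> r'" "r' < r" "1 \<le> c" "c < c'"
  shows "\<exists>a b. r' < a \<and> a \<le> r \<and> c < b \<and> b \<le> c' \<and> derived g a b \<noteq> 0"
proof (rule ccontr)
  assume none: "\<not> ?thesis"
  have row: "max_chain g (r-1) j < max_chain g r j" if "c \<le> j" "j \<le> c'" for j
    using that
  proof (induction j rule: dec_induct)
    case base
    show ?case using max_chain_rec[of r c g] assms by simp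
  next
    case (step j)
    have "derived g r (Suc j) = 0" using none step assms by auto
    then have "min (max_chain g (r-1) (Suc j)) (max_chain g r j) \<le> max_chain g (r-1) j"
      unfolding derived_def using assms by (auto split: if_splits)
    then show ?case using step max_chain_mono[of r r j "Suc j" g] by auto
  qed
  have col: "max_chain g i (c'-1) < max_chain g i c'" if "r' \<le> i" "i \<le> r" for i
    using that
  proof (induction i rule: dec_induct)
    case base
    show ?case using max_chain_rec[of r' c' g] assms by simp
  next
    case (step i)
    have "derived g (Suc i) c' = 0" using none step assms by auto
    then have "min (max_chain g i c') (max_chain g (Suc i) (c'-1)) \<le> max_chain g i (c'-1)"
      unfolding derived_def using assms by (auto split: if_splits)
    then show ?case using step max_chain_mono[of i "Suc i" c' c' g] by auto
  qed
  have "max_chain g (r-1) (c'-1) < max_chain g (r-1) c'" "max_chain g (r-1) (c'-1) < max_chain g r (c'-1)"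
    using col[of "r-1"] row[of "c'-1"] assms by auto
  then have "derived g r c' \<noteq> 0" unfolding derived_def using assms by (auto simp: min_def)
  then show False using none assms by auto
qed

lemma derived_se_pair_imp_nonzero:
  assumes nw: "derived g i j \<noteq> 0" and se: "derived g i' j' \<noteq> 0" and "i' < i" "j < j'"
  shows "\<exists>a b. i' \<le> a \<and> a < i \<and> j \<le> b \<and> b < j' \<and> g a b \<noteq> 0"
proof (rule ccontr)
  assume none: "\<not> ?thesis"
  note nw' = derived_nonzeroD[OF nw] and se' = derived_nonzeroD[OF se]
  have pos: "0 < i" "0 < j" "0 < i'" "0 < j'" using nw' se' by auto
  have "g a j = 0" if "i'-1 < a" "a \<le> i-1" for a
  proof -
    have "i' \<le> a" "a < i" using that pos by auto
    then show ?thesis using none assms by blast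
  qed
  then have "max_chain g (i-1) j = max (max_chain g (i-1) (j-1)) (max_chain g (i'-1) j)"
    by (intro max_chain_skip_zero_column) (use assms nw' in auto)
  then have "max_chain g (i-1) (j-1) < max_chain g (i'-1) j" using nw' by linarith
  moreover have "max_chain g i' (j'-1) = max (max_chain g (i'-1) (j'-1)) (max_chain g i' (j-1))"
  proof (rule max_chain_skip_zero_row)
    show "\<forall>b. j-1 < b \<and> b \<le> j'-1 \<longrightarrow> g i' b = 0"
    proof (intro allI impI)
      fix b assume "j-1 < b \<and> b \<le> j'-1"
      then have "j \<le> b" "b < j'" using pos by auto
      then show "g i' b = 0" using none assms by blast
    qed
  qed (use assms se' in auto)
  then have "max_chain g (i'-1) (j'-1) < max_chain g i' (j-1)" using se' by linarith
  moreover have "max_chain g i' (j-1) \<le> max_chain g (i-1) (j-1)"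
    "max_chain g (i'-1) j \<le> max_chain g (i'-1) (j'-1)"
    using assms by (auto intro: max_chain_mono)
  ultimately show False by linarith
qed

lemma derived_nonzero_imp_left:
  assumes "derived g i j \<noteq> 0" shows "\<exists>b. 1 \<le> b \<and> b < j \<and> g i b \<noteq> 0"
proof (rule ccontr)
  assume "\<not> ?thesis"
  with derived_nonzeroD[OF assms]
  have "max_chain g i (j-1) = max (max_chain g (i-1) (j-1)) (max_chain g i 0)"
    by (intro max_chain_skip_zero_row) auto
  then show False using derived_nonzeroD[OF assms] by simp
qed

lemma derived_nonzero_imp_below:
  assumes "derived g i j \<noteq> 0" shows "\<exists>a. 1 \<le> a \<and> a < i \<and> g a j \<noteq> 0"
proof (rule ccontr)
  assume "\<not> ?thesis"
  with derived_nonzeroD[OF assms]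
  have "max_chain g (i-1) j = max (max_chain g (i-1) (j-1)) (max_chain g 0 j)"
    by (intro max_chain_skip_zero_column) auto
  then show False using derived_nonzeroD[OF assms] by simp
qed

definition has_se_chain :: "filling \<Rightarrow> nat \<Rightarrow> nat \<Rightarrow> nat \<Rightarrow> bool" where
  "has_se_chain g s p q \<longleftrightarrow> (\<exists>c :: nat \<Rightarrow> cell.
     (\<forall>t\<in>{1..s}. entry g (c t) \<noteq> 0 \<and> fst (c t) \<in> {1..p} \<and> snd (c t) \<in> {1..q}) \<and>
     (\<forall>t\<in>{1..<s}. fst (c (Suc t)) < fst (c t) \<and> snd (c t) < snd (c (Suc t))))"

lemma has_se_chain_derived:
  assumes "has_se_chain g (Suc s) p q"
  shows "has_se_chain (derived g) s p q"
proof -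
  obtain c where c_in: "\<forall>t\<in>{1..Suc s}. entry g (c t) \<noteq> 0 \<and> fst (c t) \<in> {1..p} \<and> snd (c t) \<in> {1..q}"
    and c_se: "\<forall>t\<in>{1..<Suc s}. fst (c (Suc t)) < fst (c t) \<and> snd (c t) < snd (c (Suc t))"
    using assms unfolding has_se_chain_def by blast
  have "\<forall>t\<in>{1..s}. \<exists>w. fst (c (Suc t)) < fst w \<and> fst w \<le> fst (c t) \<and>
      snd (c t) < snd w \<and> snd w \<le> snd (c (Suc t)) \<and> entry (derived g) w \<noteq> 0"
  proof
    fix t assume "t \<in> {1..s}"
    then have "\<exists>a b. fst (c (Suc t)) < a \<and> a \<le> fst (c t) \<and> snd (c t) < b \<and> b \<le> snd (c (Suc t)) \<and>
        derived g a b \<noteq> 0"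
      using c_in c_se by (intro se_pair_imp_derived_nonzero) (auto simp: entry_def)
    then show "\<exists>w. fst (c (Suc t)) < fst w \<and> fst w \<le> fst (c t) \<and>
      snd (c t) < snd w \<and> snd w \<le> snd (c (Suc t)) \<and> entry (derived g) w \<noteq> 0"
      by (auto simp: entry_def)
  qed
  then obtain w where w: "\<forall>t\<in>{1..s}. fst (c (Suc t)) < fst (w t) \<and> fst (w t) \<le> fst (c t) \<and>
      snd (c t) < snd (w t) \<and> snd (w t) \<le> snd (c (Suc t)) \<and> entry (derived g) (w t) \<noteq> 0"
    by (metis bchoice)
  have "entry (derived g) (w t) \<noteq> 0 \<and> fst (w t) \<in> {1..p} \<and> snd (w t) \<in> {1..q}" if "t \<in> {1..s}" for t
    using that w c_in[rule_format, of t] c_in[rule_format, of "Suc t"] by fastforce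
  moreover have "fst (w (Suc t)) < fst (w t) \<and> snd (w t) < snd (w (Suc t))" if "t \<in> {1..<s}" for t
    using that w[rule_format, of t] w[rule_format, of "Suc t"] by auto
  ultimately show ?thesis unfolding has_se_chain_def by blast
qed

lemma has_se_chain_from_derived:
  assumes "1 \<le> s" "has_se_chain (derived g) s p q"
  shows "has_se_chain g (Suc s) p q"
proof -
  obtain w where w_in: "\<forall>t\<in>{1..s}. entry (derived g) (w t) \<noteq> 0 \<and> fst (w t) \<in> {1..p} \<and> snd (w t) \<in> {1..q}"
    and w_se: "\<forall>t\<in>{1..<s}. fst (w (Suc t)) < fst (w t) \<and> snd (w t) < snd (w (Suc t))"
    using assms unfolding has_se_chain_def by blast
  \<comment> \<open>A cell of \<open>g\<close> left of \<open>w 1\<close>, one between each pair of consecutive \<open>w t\<close>, and one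
    below \<open>w s\<close> form the longer chain.\<close>
  define interleaves where "interleaves t z \<longleftrightarrow>
      entry g z \<noteq> 0 \<and> fst z \<in> {1..p} \<and> snd z \<in> {1..q} \<and>
      (t \<le> s \<longrightarrow> fst (w t) \<le> fst z \<and> snd z < snd (w t)) \<and>
      (1 < t \<longrightarrow> fst z < fst (w (t-1)) \<and> snd (w (t-1)) \<le> snd z)" for t z
  have "\<exists>z. interleaves t z" if t: "t \<in> {1..Suc s}" for t
  proof -
    have "t = 1 \<or> t = Suc (t-1) \<and> t-1 \<in> {1..<s} \<or> t = Suc s \<and> 1 < t"
      using t assms by auto
    then consider "t = 1" | u where "t = Suc u" "u \<in> {1..<s}" | "t = Suc s" "1 < t"
      by blast
    then show ?thesis
    proof cases
      case 1
      have "derived g (fst (w 1)) (snd (w 1)) \<noteq> 0" "fst (w 1) \<in> {1..p}" "snd (w 1) \<le> q"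
        using w_in assms by (auto simp: entry_def)
      moreover obtain b where "1 \<le> b" "b < snd (w 1)" "g (fst (w 1)) b \<noteq> 0"
        using derived_nonzero_imp_left calculation(1) by blast
      ultimately show ?thesis using 1 by (intro exI[of _ "(fst (w 1), b)"]) (simp add: interleaves_def entry_def)
    next
      case (2 u)
      have nz: "derived g (fst (w u)) (snd (w u)) \<noteq> 0" "derived g (fst (w t)) (snd (w t)) \<noteq> 0"
        and bounds: "fst (w t) \<ge> 1" "fst (w u) \<le> p" "snd (w u) \<ge> 1" "snd (w t) \<le> q"
        using w_in 2 by (auto simp: entry_def)
      have "fst (w t) < fst (w u)" "snd (w u) < snd (w t)"
        using w_se 2 by auto
      then obtain a b where "fst (w t) \<le> a" "a < fst (w u)" "snd (w u) \<le> b" "b < snd (w t)" "g a b \<noteq> 0"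
        using derived_se_pair_imp_nonzero[OF nz] by blast
      with bounds show ?thesis using 2 by (intro exI[of _ "(a, b)"]) (simp add: interleaves_def entry_def)
    next
      case 3
      have "derived g (fst (w s)) (snd (w s)) \<noteq> 0" "fst (w s) \<le> p" "snd (w s) \<in> {1..q}"
        using w_in assms by (auto simp: entry_def)
      moreover obtain a where "1 \<le> a" "a < fst (w s)" "g a (snd (w s)) \<noteq> 0"
        using derived_nonzero_imp_below calculation(1) by blast
      ultimately show ?thesis using 3 by (intro exI[of _ "(a, snd (w s))"]) (simp add: interleaves_def entry_def)
    qed
  qed
  then obtain z where z: "\<forall>t\<in>{1..Suc s}. interleaves t (z t)" by (metis bchoice)
  have "fst (z (Suc t)) < fst (z t) \<and> snd (z t) < snd (z (Suc t))" if "t \<in> {1..<Suc s}" for t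
    using that z[rule_format, of t] z[rule_format, of "Suc t"] unfolding interleaves_def by auto
  with z show ?thesis unfolding has_se_chain_def interleaves_def by blast
qed

lemma has_se_chain_1_iff: "has_se_chain g 1 p q \<longleftrightarrow> 0 < max_chain g p q"
proof
  assume "has_se_chain g 1 p q"
  then show "0 < max_chain g p q"
    unfolding has_se_chain_def max_chain_pos_iff entry_def by fastforce
next
  assume "0 < max_chain g p q"
  then obtain a b where "a \<in> {1..p}" "b \<in> {1..q}" "g a b \<noteq> 0"
    unfolding max_chain_pos_iff by auto
  then show "has_se_chain g 1 p q"
    unfolding has_se_chain_def entry_def by (intro exI[of _ "\<lambda>_. (a, b)"]) auto
qed

lemma has_se_chain_funpow_derived_iff:
  "1 \<le> s \<Longrightarrow> has_se_chain ((derived ^^ k) g) s p q \<longleftrightarrow> has_se_chain g (s + k) p q"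
proof (induction k arbitrary: s)
  case (Suc k)
  have "has_se_chain (derived ((derived ^^ k) g)) s p q \<longleftrightarrow> has_se_chain ((derived ^^ k) g) (Suc s) p q"
    using Suc.prems has_se_chain_derived has_se_chain_from_derived by blast
  then show ?case using Suc.IH[of "Suc s"] by simp
qed simp

lemma max_chain_funpow_derived_pos_iff:
  "0 < max_chain ((derived ^^ k) g) p q \<longleftrightarrow> has_se_chain g (Suc k) p q"
  using has_se_chain_funpow_derived_iff[of 1 k g p q] has_se_chain_1_iff by simp

section \<open>Chains and patterns in a filling\<close>

lemma ne_chain_butlast:
  assumes "ne_chain f (ys @ [z])" shows "ne_chain f ys"
proof -
  have "fst (ys ! k) \<le> fst (ys ! Suc k) \<and> snd (ys ! k) \<le> snd (ys ! Suc k)" if "Suc k < length ys" for k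
    using assms that unfolding ne_chain_def by (metis Suc_lessD length_append_singleton less_SucI nth_append_left)
  then show ?thesis using assms unfolding ne_chain_def by auto
qed

lemma ne_chain_snoc:
  assumes "ne_chain f ys" "z \<notin> set ys" "entry f z \<noteq> 0"
    "ys \<noteq> [] \<Longrightarrow> fst (last ys) \<le> fst z \<and> snd (last ys) \<le> snd z"
  shows "ne_chain f (ys @ [z])"
proof -
  have "fst ((ys @ [z]) ! k) \<le> fst ((ys @ [z]) ! Suc k) \<and> snd ((ys @ [z]) ! k) \<le> snd ((ys @ [z]) ! Suc k)"
    if "Suc k < length (ys @ [z])" for k
  proof (cases "Suc k < length ys")
    case True
    then show ?thesis using assms(1) unfolding ne_chain_def by (simp add: nth_append)
  next
    case False
    then have "Suc k = length ys" using that by simp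
    then have "(ys @ [z]) ! k = last ys" "(ys @ [z]) ! Suc k = z" "ys \<noteq> []"
      by (auto simp: nth_append) (metis diff_Suc_1 last_conv_nth length_greater_0_conv zero_less_Suc)
    then show ?thesis using assms(4) by simp
  qed
  then show ?thesis using assms unfolding ne_chain_def by auto
qed

lemma chain_length_le_max_chain_last:
  assumes "is_filling n m f" "ne_chain f cs" "cs \<noteq> []"
  shows "chain_length f cs \<le> max_chain f (fst (last cs)) (snd (last cs))"
  using assms(2,3)
proof (induction cs rule: rev_induct)
  case (snoc z ys)
  obtain a b where z: "z = (a, b)" by (cases z)
  have "f a b \<noteq> 0" using snoc.prems z unfolding ne_chain_def entry_def by auto
  then have "1 \<le> a" "1 \<le> b" using assms(1) unfolding is_filling_def by auto
  then have rec: "max_chain f a b = max (max_chain f (a-1) b) (max_chain f a (b-1)) + f a b"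
    using max_chain_rec by simp
  show ?case
  proof (cases "ys = []")
    case True
    then show ?thesis using z rec by (simp add: chain_length_def entry_def)
  next
    case False
    have IH: "chain_length f ys \<le> max_chain f (fst (last ys)) (snd (last ys))"
      using snoc.IH ne_chain_butlast[OF snoc.prems(1)] False by blast
    define k where "k = length ys - 1"
    have idx: "Suc k < length (ys @ [z])" "(ys @ [z]) ! k = last ys" "(ys @ [z]) ! Suc k = z"
      using False by (auto simp: k_def nth_append last_conv_nth)
    have "fst ((ys @ [z]) ! k) \<le> fst ((ys @ [z]) ! Suc k) \<and> snd ((ys @ [z]) ! k) \<le> snd ((ys @ [z]) ! Suc k)"
      using snoc.prems(1) idx(1) unfolding ne_chain_def by blast
    moreover have "last ys \<noteq> z" using snoc.prems(1) False unfolding ne_chain_def by auto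
    ultimately have "fst (last ys) \<le> a" "snd (last ys) \<le> b" "last ys \<noteq> z"
      using idx z by auto
    then have "fst (last ys) \<le> a - 1 \<and> snd (last ys) \<le> b \<or> fst (last ys) \<le> a \<and> snd (last ys) \<le> b - 1"
      using z by (cases "last ys") auto
    then have "max_chain f (fst (last ys)) (snd (last ys)) \<le> max (max_chain f (a-1) b) (max_chain f a (b-1))"
      by (auto intro: max.coboundedI1 max.coboundedI2 max_chain_mono)
    then show ?thesis using IH z rec by (simp add: chain_length_def entry_def)
  qed
qed simp

lemma ex_ne_chain_max_chain:
  "\<exists>cs. ne_chain f cs \<and> (\<forall>c\<in>set cs. fst c \<le> p \<and> snd c \<le> q) \<and> chain_length f cs = max_chain f p q"
proof (induction f p q rule: max_chain.induct)
  case (3 g i j)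
  obtain cs where cs: "ne_chain g cs" "\<forall>c\<in>set cs. fst c \<le> Suc i \<and> snd c \<le> Suc j"
     "\<forall>c\<in>set cs. fst c \<le> i \<or> snd c \<le> j"
     "chain_length g cs = max (max_chain g i (Suc j)) (max_chain g (Suc i) j)"
  proof (cases "max_chain g (Suc i) j \<le> max_chain g i (Suc j)")
    case True
    then show ?thesis using 3(1) that by (auto simp: max_def) (meson le_SucI)
  next
    case False
    then show ?thesis using 3(2) that by (auto simp: max_def) (meson le_SucI)
  qed
  show ?case
  proof (cases "g (Suc i) (Suc j) = 0")
    case True
    then show ?thesis using cs by (intro exI[of _ cs]) auto
  next
    case False
    have "(Suc i, Suc j) \<notin> set cs" using cs(3) by fastforce
    then have "ne_chain g (cs @ [(Suc i, Suc j)])"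
      using ne_chain_snoc[OF cs(1)] cs(2) False by (simp add: entry_def)
    then show ?thesis using cs False
      by (intro exI[of _ "cs @ [(Suc i, Suc j)]"]) (auto simp: chain_length_def entry_def)
  qed
qed (auto intro: exI[of _ "[]"] simp: ne_chain_def chain_length_def)

lemma chain_length_bound_iff_max_chain:
  assumes "is_filling n m f"
  shows "(\<forall>cs. ne_chain f cs \<longrightarrow> chain_length f cs \<le> L) \<longleftrightarrow> max_chain f n m \<le> L"
proof
  assume "\<forall>cs. ne_chain f cs \<longrightarrow> chain_length f cs \<le> L"
  then show "max_chain f n m \<le> L" using ex_ne_chain_max_chain[of f n m] by auto
next
  assume L: "max_chain f n m \<le> L"
  show "\<forall>cs. ne_chain f cs \<longrightarrow> chain_length f cs \<le> L"
  proof (intro allI impI)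
    fix cs assume cs: "ne_chain f cs"
    show "chain_length f cs \<le> L"
    proof (cases "cs = []")
      case False
      then have "entry f (last cs) \<noteq> 0" using cs unfolding ne_chain_def by auto
      then have "fst (last cs) \<le> n" "snd (last cs) \<le> m"
        using assms unfolding is_filling_def entry_def by auto
      then show ?thesis using chain_length_le_max_chain_last[OF assms cs False] max_chain_mono L
        by (meson order_trans)
    qed (simp add: chain_length_def)
  qed
qed

lemma max_chain_le_if_nonzero_le:
  assumes "\<forall>a\<in>{1..p}. \<forall>b\<in>{1..q}. g a b \<noteq> 0 \<longrightarrow> max_chain g a b \<le> L"
  shows "max_chain g p q \<le> L"
  using assms
proof (induction g p q rule: max_chain.induct)
  case (3 g i j)
  show ?case
  proof (cases "g (Suc i) (Suc j) = 0")
    case True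
    moreover have "max_chain g i (Suc j) \<le> L" "max_chain g (Suc i) j \<le> L"
      using "3.IH" "3.prems" by auto
    ultimately show ?thesis by simp
  next
    case False
    then show ?thesis using "3.prems" by (metis atLeastAtMost_iff le_add1 le_refl plus_1_eq_Suc)
  qed
qed simp_all

lemma contains_pattern_iff:
  assumes "is_filling n m f"
  shows "contains_pattern d f \<longleftrightarrow> (\<exists>i j. f i j \<noteq> 0 \<and> has_se_chain f d (i-1) (j-1))"
proof
  assume "contains_pattern d f"
  then obtain c where nz: "\<forall>t\<in>{1..d+1}. entry f (c t) \<noteq> 0"
    and se: "\<forall>t\<in>{1..<d}. fst (c (t+1)) < fst (c t) \<and> snd (c t) < snd (c (t+1))"
    and ne: "\<forall>t\<in>{1..d}. fst (c t) < fst (c (d+1)) \<and> snd (c t) < snd (c (d+1))"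
    unfolding contains_pattern_def by blast
  have "entry f (c t) \<noteq> 0 \<and> fst (c t) \<in> {1..fst (c (d+1)) - 1} \<and> snd (c t) \<in> {1..snd (c (d+1)) - 1}"
    if "t \<in> {1..d}" for t
    using that nz ne assms unfolding is_filling_def entry_def by fastforce
  with se have "has_se_chain f d (fst (c (d+1)) - 1) (snd (c (d+1)) - 1)"
    unfolding has_se_chain_def by (intro exI[of _ c]) auto
  moreover have "f (fst (c (d+1))) (snd (c (d+1))) \<noteq> 0" using nz by (auto simp: entry_def)
  ultimately show "\<exists>i j. f i j \<noteq> 0 \<and> has_se_chain f d (i-1) (j-1)" by blast
next
  assume "\<exists>i j. f i j \<noteq> 0 \<and> has_se_chain f d (i-1) (j-1)"
  then obtain i j c where nz: "f i j \<noteq> 0"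
    and c_in: "\<forall>t\<in>{1..d}. entry f (c t) \<noteq> 0 \<and> fst (c t) \<in> {1..i-1} \<and> snd (c t) \<in> {1..j-1}"
    and c_se: "\<forall>t\<in>{1..<d}. fst (c (Suc t)) < fst (c t) \<and> snd (c t) < snd (c (Suc t))"
    unfolding has_se_chain_def by blast
  have "1 \<le> i" "1 \<le> j" using nz assms unfolding is_filling_def by auto
  then show "contains_pattern d f"
    unfolding contains_pattern_def
    using nz c_in c_se by (intro exI[of _ "c(d+1 := (i, j))"]) (auto simp: entry_def)
qed

section \<open>Cylindric tableaux and local rules\<close>

lemma cyl_prec_iff:
  "cyl_prec d L \<alpha> \<beta> \<longleftrightarrow> length \<alpha> = d \<and> length \<beta> = d \<and>
     (\<forall>k. Suc k < d \<longrightarrow> \<alpha> ! Suc k \<le> \<alpha> ! k) \<and> (\<forall>k. Suc k < d \<longrightarrow> \<beta> ! Suc k \<le> \<beta> ! k) \<and>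
     (\<forall>k<d. \<alpha> ! k \<le> \<beta> ! k) \<and> (\<forall>k. Suc k < d \<longrightarrow> \<beta> ! Suc k \<le> \<alpha> ! k) \<and> \<beta> ! 0 \<le> \<alpha> ! (d-1) + L"
proof -
  have "is_dpart d l \<longleftrightarrow> length l = d \<and> (\<forall>k. Suc k < d \<longrightarrow> l ! Suc k \<le> l ! k)" for l
    unfolding is_dpart_def by (subst sorted_wrt_iff_nth_Suc_transp) (auto simp: transp_def)
  then show ?thesis unfolding cyl_prec_def by auto
qed

lemma nth_map_upt_Suc: "i \<le> n \<Longrightarrow> map g [0..<Suc n] ! i = g i"
  using nth_map_upt[of i "Suc n" 0 g] by simp

lemma last_map_upt_Suc: "last (map g [0..<Suc n]) = g n"
  by simp

lemma wt_map_upt: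
  "0 < i \<Longrightarrow> i \<le> n \<Longrightarrow> wt (map g [0..<Suc n]) i = int (sum_list (g i)) - int (sum_list (g (i-1)))"
  by (simp add: wt_def nth_map_upt_Suc del: upt_Suc)

lemma cyl_ssyt_map_upt:
  assumes "g 0 = replicate d 0" "\<And>i. i < n \<Longrightarrow> cyl_prec d L (g i) (g (Suc i))"
  shows "cyl_ssyt d L (map g [0..<Suc n])"
  using assms unfolding cyl_ssyt_def by (simp add: nth_map_upt_Suc del: upt_Suc)

locale cylindric_growth =
  fixes d L :: nat
  assumes d_pos: "0 < d"
begin

abbreviation prec :: "nat list \<Rightarrow> nat list \<Rightarrow> bool" (infix "\<prec>" 50) where
  "\<alpha> \<prec> \<beta> \<equiv> cyl_prec d L \<alpha> \<beta>"

definition grow :: "nat list \<Rightarrow> nat list \<Rightarrow> nat list \<Rightarrow> nat \<Rightarrow> nat list" where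
  "grow \<kappa> \<mu> \<nu> x = map (\<lambda>k. max (\<mu>!k) (\<nu>!k) +
     (if k = 0 then x + (min (\<mu>!(d-1)) (\<nu>!(d-1)) - \<kappa>!(d-1))
      else min (\<mu>!(k-1)) (\<nu>!(k-1)) - \<kappa>!(k-1))) [0..<d]"

definition ungrow :: "nat list \<Rightarrow> nat list \<Rightarrow> nat list \<Rightarrow> nat list" where
  "ungrow \<mu> \<nu> \<rho> = map (\<lambda>k. if k < d - 1
       then min (\<mu>!k) (\<nu>!k) + max (\<mu>!Suc k) (\<nu>!Suc k) - \<rho>!Suc k
       else min (\<mu>!(d-1)) (\<nu>!(d-1)) - (\<rho>!0 - max (\<mu>!0) (\<nu>!0))) [0..<d]"

definition ungrow_entry :: "nat list \<Rightarrow> nat list \<Rightarrow> nat list \<Rightarrow> nat" where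
  "ungrow_entry \<mu> \<nu> \<rho> = (\<rho>!0 - max (\<mu>!0) (\<nu>!0)) - min (\<mu>!(d-1)) (\<nu>!(d-1))"

definition local_admissible :: "nat list \<Rightarrow> nat list \<Rightarrow> nat list \<Rightarrow> nat \<Rightarrow> nat list \<Rightarrow> bool" where
  "local_admissible \<kappa> \<mu> \<nu> x \<rho> \<longleftrightarrow>
     (0 < x \<longrightarrow> \<kappa>!(d-1) = 0) \<and> \<rho>!0 \<le> min (\<mu>!(d-1)) (\<nu>!(d-1)) + L"

lemma length_grow [simp]: "length (grow \<kappa> \<mu> \<nu> x) = d"
  by (simp add: grow_def)

lemma length_ungrow [simp]: "length (ungrow \<mu> \<nu> \<rho>) = d"
  by (simp add: ungrow_def)

lemma nth_grow:
  "k < d \<Longrightarrow> grow \<kappa> \<mu> \<nu> x ! k = max (\<mu>!k) (\<nu>!k) +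
     (if k = 0 then x + (min (\<mu>!(d-1)) (\<nu>!(d-1)) - \<kappa>!(d-1))
      else min (\<mu>!(k-1)) (\<nu>!(k-1)) - \<kappa>!(k-1))"
  by (simp add: grow_def)

lemma nth_ungrow:
  "k < d \<Longrightarrow> ungrow \<mu> \<nu> \<rho> ! k = (if k < d - 1
       then min (\<mu>!k) (\<nu>!k) + max (\<mu>!Suc k) (\<nu>!Suc k) - \<rho>!Suc k
       else min (\<mu>!(d-1)) (\<nu>!(d-1)) - (\<rho>!0 - max (\<mu>!0) (\<nu>!0)))"
  by (simp add: ungrow_def)

lemma grow_commute: "grow \<kappa> \<mu> \<nu> x = grow \<kappa> \<nu> \<mu> x"
  unfolding grow_def by (simp add: max.commute min.commute)

lemma local_admissible_commute: "local_admissible \<kappa> \<mu> \<nu> x \<rho> = local_admissible \<kappa> \<nu> \<mu> x \<rho>"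
  unfolding local_admissible_def by (simp add: min.commute)

lemma prec_zero_iff [simp]: "\<alpha> \<prec> replicate d 0 \<longleftrightarrow> \<alpha> = replicate d 0"
  unfolding cyl_prec_iff using d_pos by (auto intro: nth_equalityI)

lemma prec_grow1:
  assumes "\<kappa> \<prec> \<mu>" "\<kappa> \<prec> \<nu>" "local_admissible \<kappa> \<mu> \<nu> x (grow \<kappa> \<mu> \<nu> x)"
  shows "\<mu> \<prec> grow \<kappa> \<mu> \<nu> x"
proof -
  note prec = assms(1,2)[unfolded cyl_prec_iff]
  have below: "grow \<kappa> \<mu> \<nu> x ! Suc k \<le> min (\<mu>!k) (\<nu>!k)" if "Suc k < d" for k
  proof -
    have "\<mu> ! Suc k \<le> \<kappa> ! k" "\<nu> ! Suc k \<le> \<kappa> ! k" "\<kappa> ! k \<le> \<mu> ! k" "\<kappa> ! k \<le> \<nu> ! k"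
      using prec that by auto
    then show ?thesis using that by (auto simp: nth_grow max_def min_def)
  qed
  have above: "max (\<mu>!k) (\<nu>!k) \<le> grow \<kappa> \<mu> \<nu> x ! k" if "k < d" for k
    using that by (simp add: nth_grow)
  have "grow \<kappa> \<mu> \<nu> x ! 0 \<le> \<mu> ! (d-1) + L"
    using assms(3) unfolding local_admissible_def by (auto simp: min_def split: if_splits)
  moreover have "grow \<kappa> \<mu> \<nu> x ! Suc k \<le> grow \<kappa> \<mu> \<nu> x ! k" "grow \<kappa> \<mu> \<nu> x ! Suc k \<le> \<mu> ! k"
    if "Suc k < d" for k
    using below[OF that] above[of k] that by auto
  moreover have "\<mu> ! k \<le> grow \<kappa> \<mu> \<nu> x ! k" if "k < d" for k
    using above[OF that] by simp
  ultimately show ?thesis using prec unfolding cyl_prec_iff by simp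
qed

lemma prec_grow2:
  assumes "\<kappa> \<prec> \<mu>" "\<kappa> \<prec> \<nu>" "local_admissible \<kappa> \<mu> \<nu> x (grow \<kappa> \<mu> \<nu> x)"
  shows "\<nu> \<prec> grow \<kappa> \<mu> \<nu> x"
  using prec_grow1[of \<kappa> \<nu> \<mu> x] assms by (simp add: grow_commute local_admissible_commute)

lemma ungrow_bounds:
  assumes "\<mu> \<prec> \<rho>" "\<nu> \<prec> \<rho>"
  shows "k < d \<Longrightarrow> ungrow \<mu> \<nu> \<rho> ! k \<le> min (\<mu>!k) (\<nu>!k)"
    and "Suc k < d \<Longrightarrow> max (\<mu>!Suc k) (\<nu>!Suc k) \<le> ungrow \<mu> \<nu> \<rho> ! k"
proof -
  note prec = assms[unfolded cyl_prec_iff]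
  show "ungrow \<mu> \<nu> \<rho> ! k \<le> min (\<mu>!k) (\<nu>!k)" if "k < d"
  proof (cases "k < d - 1")
    case True
    then have "max (\<mu>!Suc k) (\<nu>!Suc k) \<le> \<rho>!Suc k" using prec by auto
    then show ?thesis using True that by (simp add: nth_ungrow max_def min_def)
  next
    case False
    then have "k = d - 1" using that by simp
    then show ?thesis using d_pos by (simp add: nth_ungrow min_def)
  qed
  show "max (\<mu>!Suc k) (\<nu>!Suc k) \<le> ungrow \<mu> \<nu> \<rho> ! k" if "Suc k < d"
  proof -
    have "\<rho>!Suc k \<le> min (\<mu>!k) (\<nu>!k)" "k < d - 1" using prec that by auto
    then show ?thesis by (simp add: nth_ungrow max_def min_def)
  qed
qed

lemma ungrow_prec:
  assumes "\<mu> \<prec> \<rho>" "\<nu> \<prec> \<rho>"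
  shows "ungrow \<mu> \<nu> \<rho> \<prec> \<mu>" "ungrow \<mu> \<nu> \<rho> \<prec> \<nu>"
proof -
  note prec = assms[unfolded cyl_prec_iff] and bounds = ungrow_bounds[OF assms]
  have "ungrow \<mu> \<nu> \<rho> ! Suc k \<le> ungrow \<mu> \<nu> \<rho> ! k" if "Suc k < d" for k
    using bounds(1)[of "Suc k"] bounds(2)[of k] that by simp
  moreover have "max (\<mu>!0) (\<nu>!0) \<le> ungrow \<mu> \<nu> \<rho> ! (d-1) + L"
    using prec d_pos by (auto simp: nth_ungrow)
  ultimately show "ungrow \<mu> \<nu> \<rho> \<prec> \<mu>" "ungrow \<mu> \<nu> \<rho> \<prec> \<nu>"
    using prec bounds unfolding cyl_prec_iff by auto
qed

lemma local_admissible_ungrow: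
  assumes "\<mu> \<prec> \<rho>" "\<nu> \<prec> \<rho>"
  shows "local_admissible (ungrow \<mu> \<nu> \<rho>) \<mu> \<nu> (ungrow_entry \<mu> \<nu> \<rho>) \<rho>"
  using assms d_pos unfolding local_admissible_def cyl_prec_iff
  by (auto simp: ungrow_entry_def nth_ungrow)

lemma grow_ungrow:
  assumes "\<mu> \<prec> \<rho>" "\<nu> \<prec> \<rho>"
  shows "grow (ungrow \<mu> \<nu> \<rho>) \<mu> \<nu> (ungrow_entry \<mu> \<nu> \<rho>) = \<rho>"
proof (rule nth_equalityI)
  note prec = assms[unfolded cyl_prec_iff]
  show "length (grow (ungrow \<mu> \<nu> \<rho>) \<mu> \<nu> (ungrow_entry \<mu> \<nu> \<rho>)) = length \<rho>"
    using prec by simp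
  fix k assume "k < length (grow (ungrow \<mu> \<nu> \<rho>) \<mu> \<nu> (ungrow_entry \<mu> \<nu> \<rho>))"
  then have k: "k < d" by simp
  show "grow (ungrow \<mu> \<nu> \<rho>) \<mu> \<nu> (ungrow_entry \<mu> \<nu> \<rho>) ! k = \<rho> ! k"
  proof (cases k)
    case 0
    define M m where "M = max (\<mu>!0) (\<nu>!0)" and "m = min (\<mu>!(d-1)) (\<nu>!(d-1))"
    have "M \<le> \<rho>!0" using prec d_pos by (auto simp: M_def)
    have "grow (ungrow \<mu> \<nu> \<rho>) \<mu> \<nu> (ungrow_entry \<mu> \<nu> \<rho>) ! 0
        = M + ((\<rho>!0 - M - m) + (m - (m - (\<rho>!0 - M))))"
      using d_pos by (simp add: nth_grow nth_ungrow ungrow_entry_def M_def m_def)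
    also have "\<dots> = \<rho>!0" using \<open>M \<le> \<rho>!0\<close> by linarith
    finally show ?thesis using 0 by simp
  next
    case (Suc k')
    define M m where "M = max (\<mu>!k) (\<nu>!k)" and "m = min (\<mu>!k') (\<nu>!k')"
    have "M \<le> \<rho>!k" "\<rho>!k \<le> m" "k' < d - 1" using prec k Suc by (auto simp: M_def m_def)
    have "grow (ungrow \<mu> \<nu> \<rho>) \<mu> \<nu> (ungrow_entry \<mu> \<nu> \<rho>) ! k = M + (m - (m + M - \<rho>!k))"
      using k Suc \<open>k' < d - 1\<close> by (simp add: nth_grow nth_ungrow M_def m_def)
    also have "\<dots> = \<rho>!k" using \<open>M \<le> \<rho>!k\<close> \<open>\<rho>!k \<le> m\<close> by linarith
    finally show ?thesis .
  qed
qed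

lemma
  assumes "\<kappa> \<prec> \<mu>" "\<kappa> \<prec> \<nu>" "local_admissible \<kappa> \<mu> \<nu> x (grow \<kappa> \<mu> \<nu> x)"
  shows ungrow_grow: "ungrow \<mu> \<nu> (grow \<kappa> \<mu> \<nu> x) = \<kappa>"
    and ungrow_entry_grow: "ungrow_entry \<mu> \<nu> (grow \<kappa> \<mu> \<nu> x) = x"
proof -
  note prec = assms(1,2)[unfolded cyl_prec_iff]
  have x_pos: "0 < x \<Longrightarrow> \<kappa>!(d-1) = 0" using assms(3) unfolding local_admissible_def by simp
  have le: "\<kappa>!k \<le> min (\<mu>!k) (\<nu>!k)" if "k < d" for k using prec that by auto
  have grow0: "grow \<kappa> \<mu> \<nu> x ! 0 = max (\<mu>!0) (\<nu>!0) + (x + (min (\<mu>!(d-1)) (\<nu>!(d-1)) - \<kappa>!(d-1)))"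
    using d_pos by (simp add: nth_grow)
  show "ungrow \<mu> \<nu> (grow \<kappa> \<mu> \<nu> x) = \<kappa>"
  proof (rule nth_equalityI)
    show "length (ungrow \<mu> \<nu> (grow \<kappa> \<mu> \<nu> x)) = length \<kappa>" using prec by simp
    fix k assume "k < length (ungrow \<mu> \<nu> (grow \<kappa> \<mu> \<nu> x))"
    then have k: "k < d" by simp
    show "ungrow \<mu> \<nu> (grow \<kappa> \<mu> \<nu> x) ! k = \<kappa> ! k"
    proof (cases "k < d - 1")
      case True
      then show ?thesis using k le[of k] by (simp add: nth_ungrow nth_grow max_def min_def)
    next
      case False
      then have "k = d - 1" using k by simp
      then show ?thesis using k grow0 le[of k] x_pos by (cases "x = 0") (auto simp: nth_ungrow)
    qed
  qed
  show "ungrow_entry \<mu> \<nu> (grow \<kappa> \<mu> \<nu> x) = x"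
    using grow0 x_pos unfolding ungrow_entry_def by (cases "x = 0") auto
qed

lemma sum_list_grow:
  assumes "length \<kappa> = d" "length \<mu> = d" "length \<nu> = d" "\<forall>k<d. \<kappa>!k \<le> \<mu>!k \<and> \<kappa>!k \<le> \<nu>!k"
  shows "sum_list (grow \<kappa> \<mu> \<nu> x) + sum_list \<kappa> = sum_list \<mu> + sum_list \<nu> + x"
proof -
  define M m where "M k = max (\<mu>!k) (\<nu>!k)" and "m k = min (\<mu>!k) (\<nu>!k)" for k
  define gap where "gap k = m k - \<kappa>!k" for k
  obtain d' where d': "d = Suc d'" using d_pos by (cases d) auto
  have shift: "(\<Sum>k<d. h k) = h 0 + (\<Sum>k<d'. h (Suc k))" for h :: "nat \<Rightarrow> nat"
    unfolding d' by (rule sum.lessThan_Suc_shift)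
  have "grow \<kappa> \<mu> \<nu> x ! k = M k + (if k = 0 then gap (d-1) + x else gap (k-1))" if "k < d" for k
    using that by (simp add: nth_grow M_def m_def gap_def)
  then have "sum_list (grow \<kappa> \<mu> \<nu> x) = (\<Sum>k<d. M k + (if k = 0 then gap (d-1) + x else gap (k-1)))"
    by (simp add: sum_list_sum_nth atLeast0LessThan)
  also have "\<dots> = (\<Sum>k<d. M k) + ((gap d' + x) + (\<Sum>k<d'. gap k))"
    unfolding sum.distrib shift[of "\<lambda>k. if k = 0 then gap (d-1) + x else gap (k-1)"] by (simp add: d')
  also have "\<dots> = (\<Sum>k<d. M k) + (\<Sum>k<d. gap k) + x"
    by (simp add: d')
  also have "(\<Sum>k<d. gap k) = (\<Sum>k<d. m k) - (\<Sum>k<d. \<kappa>!k)"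
    unfolding gap_def m_def using assms(4) by (intro sum_subtractf_nat) simp
  finally have "sum_list (grow \<kappa> \<mu> \<nu> x) = (\<Sum>k<d. M k) + ((\<Sum>k<d. m k) - (\<Sum>k<d. \<kappa>!k)) + x" .
  moreover have "(\<Sum>k<d. \<kappa>!k) \<le> (\<Sum>k<d. m k)"
    using assms(4) by (intro sum_mono) (simp add: m_def)
  moreover have "(\<Sum>k<d. M k) + (\<Sum>k<d. m k) = (\<Sum>k<d. \<mu>!k) + (\<Sum>k<d. \<nu>!k)"
    unfolding sum.distrib[symmetric] by (rule sum.cong) (auto simp: M_def m_def max_def min_def)
  ultimately show ?thesis
    using assms(1-3) by (simp add: sum_list_sum_nth atLeast0LessThan)
qed

section \<open>The growth diagram\<close>

fun growth :: "filling \<Rightarrow> nat \<Rightarrow> nat \<Rightarrow> nat list" where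
  "growth f 0 j = replicate d 0"
| "growth f (Suc i) 0 = replicate d 0"
| "growth f (Suc i) (Suc j) =
     grow (growth f i j) (growth f i (Suc j)) (growth f (Suc i) j) (f (Suc i) (Suc j))"

lemma growth_0_right [simp]: "growth f i 0 = replicate d 0"
  by (cases i) auto

lemma growth_rec:
  "0 < i \<Longrightarrow> 0 < j \<Longrightarrow>
     growth f i j = grow (growth f (i-1) (j-1)) (growth f (i-1) j) (growth f i (j-1)) (f i j)"
  by (cases i; cases j) auto

lemma length_growth [simp]: "length (growth f i j) = d"
  by (induction f i j rule: growth.induct) auto

lemma growth_mono:
  assumes "i \<le> i'" "j \<le> j'" "k < d"
  shows "growth f i j ! k \<le> growth f i' j' ! k"
proof -
  have "growth f i j ! k \<le> growth f i' j ! k"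
    by (rule lift_Suc_mono_le[OF _ assms(1)]) (cases j; simp add: nth_grow assms(3) trans_le_add1)
  also have "\<dots> \<le> growth f i' j' ! k"
    by (rule lift_Suc_mono_le[OF _ assms(2)]) (cases i'; simp add: nth_grow assms(3) trans_le_add1)
  finally show ?thesis .
qed

lemma growth_reflect: "growth (reflect f) i j = growth f j i"
  by (induction "reflect f" i j rule: growth.induct) (auto simp: reflect_def grow_commute)

lemma growth_first_part_eq_max_chain:
  assumes "\<forall>a b. 1 \<le> a \<longrightarrow> a \<le> p \<longrightarrow> 1 \<le> b \<longrightarrow> b \<le> q \<longrightarrow>
      min (growth f (a-1) b ! (d-1)) (growth f a (b-1) ! (d-1)) = 0"
  shows "growth f p q ! 0 = max_chain f p q"
  using assms
proof (induction f p q rule: growth.induct)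
  case (3 f i j)
  have "min (growth f i (Suc j) ! (d-1)) (growth f (Suc i) j ! (d-1)) = 0"
    using "3.prems"[rule_format, of "Suc i" "Suc j"] by simp
  moreover have "growth f i (Suc j) ! 0 = max_chain f i (Suc j)" "growth f (Suc i) j ! 0 = max_chain f (Suc i) j"
    using "3.IH"(2,3) "3.prems" by auto
  ultimately show ?case using d_pos by (simp add: nth_grow)
qed (use d_pos in auto)

text \<open>For \<open>k > 0\<close>, part \<open>k\<close> of the local rule is the \<open>max_chain\<close> recursion of the \<open>k\<close>-th
  derived filling, whose entries are the \<open>min - \<kappa>\<close> terms of part \<open>k - 1\<close>; the hypothesis
  kills the wrap-around term that feeds part \<open>d - 1\<close> into part \<open>0\<close>.\<close>
lemma growth_part_eq_max_chain_derived:
  assumes "\<forall>a b. a \<le> p \<longrightarrow> b \<le> q \<longrightarrow>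
      growth f a b ! (d-1) = 0 \<or> max_chain ((derived ^^ (d-1)) f) a b = 0"
    and "k < d"
  shows "growth f p q ! k = max_chain ((derived ^^ k) f) p q"
  using assms
proof (induction f p q arbitrary: k rule: growth.induct)
  case (3 f i j)
  have IH: "growth f i j ! k = max_chain ((derived ^^ k) f) i j"
    "growth f i (Suc j) ! k = max_chain ((derived ^^ k) f) i (Suc j)"
    "growth f (Suc i) j ! k = max_chain ((derived ^^ k) f) (Suc i) j" if "k < d" for k
    using "3.IH" "3.prems" that by auto
  show ?case
  proof (cases k)
    case 0
    have "growth f (Suc i) j ! (d-1) = 0"
      using "3.prems"(1)[rule_format, of "Suc i" j] IH(3)[of "d-1"] d_pos by auto
    then show ?thesis using 0 IH(2,3)[of 0] d_pos by (simp add: nth_grow)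
  next
    case (Suc k')
    then show ?thesis using IH[of k] IH[of k'] "3.prems"(2) by (simp add: nth_grow derived_Suc_Suc)
  qed
qed simp_all

lemma growth_last_part_eq_0_iff:
  "growth f p q ! (d-1) = 0 \<longleftrightarrow> \<not> has_se_chain f d p q"
proof -
  have "growth f p q ! (d-1) = 0 \<longleftrightarrow> max_chain ((derived ^^ (d-1)) f) p q = 0"
  proof
    assume "growth f p q ! (d-1) = 0"
    then have "\<forall>a b. a \<le> p \<longrightarrow> b \<le> q \<longrightarrow> growth f a b ! (d-1) = 0"
      using growth_mono[of _ p _ q "d-1" f] d_pos by fastforce
    then show "max_chain ((derived ^^ (d-1)) f) p q = 0"
      using growth_part_eq_max_chain_derived[of p q f "d-1"] d_pos by auto
  next
    assume "max_chain ((derived ^^ (d-1)) f) p q = 0"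
    then have "\<forall>a b. a \<le> p \<longrightarrow> b \<le> q \<longrightarrow> max_chain ((derived ^^ (d-1)) f) a b = 0"
      using max_chain_mono[of _ p _ q "(derived ^^ (d-1)) f"] by fastforce
    then show "growth f p q ! (d-1) = 0"
      using growth_part_eq_max_chain_derived[of p q f "d-1"] d_pos by auto
  qed
  also have "\<dots> \<longleftrightarrow> \<not> has_se_chain f d p q"
    using max_chain_funpow_derived_pos_iff[of "d-1" f p q] d_pos by auto
  finally show ?thesis .
qed

lemma growth_first_part_at_corner:
  assumes "0 < i" "0 < j" "growth f (i-1) (j-1) ! (d-1) = 0"
  shows "growth f i j ! 0 = max_chain f i j + min (growth f (i-1) j ! (d-1)) (growth f i (j-1) ! (d-1))"
proof -
  have "growth f a (b-1) ! (d-1) = 0" if "a \<le> i-1" "b \<le> j" for a b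
    using growth_mono[of a "i-1" "b-1" "j-1" "d-1" f] that assms(3) d_pos by simp
  then have "growth f (i-1) j ! 0 = max_chain f (i-1) j"
    by (intro growth_first_part_eq_max_chain) auto
  moreover have "growth f (a-1) b ! (d-1) = 0" if "a \<le> i" "b \<le> j-1" for a b
    using growth_mono[of "a-1" "i-1" b "j-1" "d-1" f] that assms(3) d_pos by simp
  then have "growth f i (j-1) ! 0 = max_chain f i (j-1)"
    by (intro growth_first_part_eq_max_chain) auto
  ultimately show ?thesis
    using assms d_pos growth_rec[of i j f] max_chain_rec[of i j f] by (simp add: nth_grow)
qed

definition corner_admissible :: "filling \<Rightarrow> nat \<Rightarrow> nat \<Rightarrow> bool" where
  "corner_admissible f i j \<longleftrightarrow>
     local_admissible (growth f (i-1) (j-1)) (growth f (i-1) j) (growth f i (j-1)) (f i j) (growth f i j)"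

abbreviation corners_admissible :: "filling \<Rightarrow> nat \<Rightarrow> nat \<Rightarrow> bool" where
  "corners_admissible f p q \<equiv> \<forall>a\<in>{1..p}. \<forall>b\<in>{1..q}. corner_admissible f a b"

lemma growth_prec:
  assumes "corners_admissible f p q"
  shows "(0 < p \<longrightarrow> growth f (p-1) q \<prec> growth f p q) \<and> (0 < q \<longrightarrow> growth f p (q-1) \<prec> growth f p q)"
  using assms
proof (induction "p + q" arbitrary: p q rule: less_induct)
  case less
  show ?case
  proof (cases "p = 0 \<or> q = 0")
    case True
    then show ?thesis by auto
  next
    case False
    have "corners_admissible f (p-1) q" "corners_admissible f p (q-1)" using less.prems by auto
    then have "growth f (p-1) (q-1) \<prec> growth f (p-1) q" "growth f (p-1) (q-1) \<prec> growth f p (q-1)"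
      using less.hyps[of "p-1" q] less.hyps[of p "q-1"] False by auto
    moreover have "corner_admissible f p q" using False less.prems by auto
    ultimately show ?thesis
      using False prec_grow1 prec_grow2 growth_rec[of p q f] unfolding corner_admissible_def by auto
  qed
qed

lemma corner_admissible_iff:
  assumes "0 < i" "0 < j" "growth f (i-1) (j-1) \<prec> growth f (i-1) j" "growth f (i-1) (j-1) \<prec> growth f i (j-1)"
  shows "corner_admissible f i j \<longleftrightarrow>
    (f i j \<noteq> 0 \<longrightarrow> \<not> has_se_chain f d (i-1) (j-1) \<and> max_chain f i j \<le> L)"
proof (cases "f i j = 0")
  case True
  note prec = assms(3,4)[unfolded cyl_prec_iff]
  have bound: "r \<le> min a b + L"
    if "r = max u v + (min a b - k)" "k \<le> a" "k \<le> b" "u \<le> k + L" "v \<le> k + L" for r u v a b k :: nat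
    using that by (auto simp: max_def min_def)
  have "growth f i j ! 0 \<le> min (growth f (i-1) j ! (d-1)) (growth f i (j-1) ! (d-1)) + L"
  proof (rule bound)
    show "growth f i j ! 0 =
      max (growth f (i-1) j ! 0) (growth f i (j-1) ! 0) +
      (min (growth f (i-1) j ! (d-1)) (growth f i (j-1) ! (d-1)) - growth f (i-1) (j-1) ! (d-1))"
      using True assms d_pos growth_rec[of i j f] by (simp add: nth_grow)
  qed (use prec d_pos in auto)
  then show ?thesis using True unfolding corner_admissible_def local_admissible_def by simp
next
  case False
  then show ?thesis
    using growth_first_part_at_corner[OF assms(1,2)] growth_last_part_eq_0_iff[of f "i-1" "j-1"]
    unfolding corner_admissible_def local_admissible_def by auto
qed

lemma corners_admissible_iff:
  "corners_admissible f p q \<longleftrightarrow>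
    (\<forall>a\<in>{1..p}. \<forall>b\<in>{1..q}. f a b \<noteq> 0 \<longrightarrow> \<not> has_se_chain f d (a-1) (b-1) \<and> max_chain f a b \<le> L)"
    (is "_ \<longleftrightarrow> (\<forall>a\<in>_. \<forall>b\<in>_. ?ok a b)")
proof
  assume adm: "corners_admissible f p q"
  show "\<forall>a\<in>{1..p}. \<forall>b\<in>{1..q}. ?ok a b"
  proof (intro ballI)
    fix a b assume ab: "a \<in> {1..p}" "b \<in> {1..q}"
    have "corners_admissible f (a-1) b" "corners_admissible f a (b-1)" using adm ab by auto
    then have "growth f (a-1) (b-1) \<prec> growth f (a-1) b" "growth f (a-1) (b-1) \<prec> growth f a (b-1)"
      using growth_prec[of "a-1" b f] growth_prec[of a "b-1" f] ab by auto
    then show "?ok a b" using corner_admissible_iff[of a b f] adm ab by auto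
  qed
next
  assume ok: "\<forall>a\<in>{1..p}. \<forall>b\<in>{1..q}. ?ok a b"
  have "corner_admissible f a b" if "a + b = s" "a \<in> {1..p}" "b \<in> {1..q}" for s a b
    using that
  proof (induction s arbitrary: a b rule: less_induct)
    case (less s)
    have "corner_admissible f a' b'" if "a' \<in> {1..p}" "b' \<in> {1..q}" "a' + b' < s" for a' b'
      using less.IH that by blast
    then have "corners_admissible f (a-1) b" "corners_admissible f a (b-1)"
      using less.prems by auto
    then have "growth f (a-1) (b-1) \<prec> growth f (a-1) b" "growth f (a-1) (b-1) \<prec> growth f a (b-1)"
      using growth_prec[of "a-1" b f] growth_prec[of a "b-1" f] less.prems by auto
    then show ?case using corner_admissible_iff[of a b f] ok less.prems by auto
  qed
  then show "corners_admissible f p q" by blast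
qed

lemma admissible_fillings_iff:
  "f \<in> admissible_fillings d L n m \<longleftrightarrow> is_filling n m f \<and> corners_admissible f n m"
proof (cases "is_filling n m f")
  case True
  have "\<not> contains_pattern d f \<longleftrightarrow> (\<forall>a b. f a b \<noteq> 0 \<longrightarrow> \<not> has_se_chain f d (a-1) (b-1))"
    using contains_pattern_iff[OF True] by blast
  also have "\<dots> \<longleftrightarrow> (\<forall>a\<in>{1..n}. \<forall>b\<in>{1..m}. f a b \<noteq> 0 \<longrightarrow> \<not> has_se_chain f d (a-1) (b-1))"
    using True unfolding is_filling_def by (meson atLeastAtMost_iff)
  finally have "\<not> contains_pattern d f \<longleftrightarrow> \<dots>" .
  moreover have "max_chain f n m \<le> L \<longleftrightarrow> (\<forall>a\<in>{1..n}. \<forall>b\<in>{1..m}. f a b \<noteq> 0 \<longrightarrow> max_chain f a b \<le> L)"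
  proof
    assume "max_chain f n m \<le> L"
    then show "\<forall>a\<in>{1..n}. \<forall>b\<in>{1..m}. f a b \<noteq> 0 \<longrightarrow> max_chain f a b \<le> L"
      using max_chain_mono[where g=f and ?i'=n and ?j'=m] by (meson atLeastAtMost_iff order_trans)
  qed (rule max_chain_le_if_nonzero_le)
  ultimately show ?thesis
    using True chain_length_bound_iff_max_chain[OF True] corners_admissible_iff[of n m f]
    unfolding admissible_fillings_def by blast
qed (simp add: admissible_fillings_def)

lemma sum_list_growth:
  assumes "corners_admissible f p q"
  shows "sum_list (growth f p q) = (\<Sum>a=1..p. \<Sum>b=1..q. f a b)"
  using assms
proof (induction f p q rule: growth.induct)
  case (3 f i j)
  let ?S = "\<lambda>p q. \<Sum>a=1..p. \<Sum>b=1..q. f a b"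
  have prec: "growth f i j \<prec> growth f i (Suc j)" "growth f i j \<prec> growth f (Suc i) j"
    using growth_prec[of "Suc i" j f] growth_prec[of i "Suc j" f] "3.prems" by auto
  have "sum_list (growth f (Suc i) (Suc j)) + sum_list (growth f i j) =
      sum_list (growth f i (Suc j)) + sum_list (growth f (Suc i) j) + f (Suc i) (Suc j)"
    using prec unfolding growth.simps by (intro sum_list_grow) (auto simp: cyl_prec_iff)
  moreover have "?S (Suc i) (Suc j) + ?S i j = ?S i (Suc j) + ?S (Suc i) j + f (Suc i) (Suc j)"
    by (simp add: sum.distrib)
  ultimately show ?case using "3.IH" "3.prems" by auto
qed simp_all

definition growth_tableaux :: "nat \<Rightarrow> nat \<Rightarrow> filling \<Rightarrow> nat list list \<times> nat list list" where
  "growth_tableaux n m f = (map (\<lambda>i. growth f i m) [0..<Suc n], map (\<lambda>j. growth f n j) [0..<Suc m])"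

lemma growth_tableaux_in_tableau_pairs:
  assumes "f \<in> admissible_fillings d L n m"
  shows "growth_tableaux n m f \<in> tableau_pairs d L n m"
proof -
  have adm: "corners_admissible f n m" using assms admissible_fillings_iff by blast
  have "growth f i m \<prec> growth f (Suc i) m" if "i < n" for i
    using growth_prec[of "Suc i" m f] adm that by auto
  moreover have "growth f n j \<prec> growth f n (Suc j)" if "j < m" for j
    using growth_prec[of n "Suc j" f] adm that by auto
  ultimately show ?thesis
    unfolding tableau_pairs_def growth_tableaux_def shape_def
    by (simp add: cyl_ssyt_map_upt last_map_upt_Suc del: upt_Suc)
qed

lemma growth_tableaux_weights:
  assumes "f \<in> admissible_fillings d L n m"
  shows "i \<in> {1..n} \<Longrightarrow> int (\<Sum>j = 1..m. f i j) = wt (fst (growth_tableaux n m f)) i"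
    and "j \<in> {1..m} \<Longrightarrow> int (\<Sum>i = 1..n. f i j) = wt (snd (growth_tableaux n m f)) j"
proof -
  have size: "sum_list (growth f p q) = (\<Sum>a=1..p. \<Sum>b=1..q. f a b)" if "p \<le> n" "q \<le> m" for p q
    using assms that by (intro sum_list_growth) (auto simp: admissible_fillings_iff)
  show "int (\<Sum>j = 1..m. f i j) = wt (fst (growth_tableaux n m f)) i" if i: "i \<in> {1..n}"
  proof -
    obtain i' where "i = Suc i'" using i by (cases i) auto
    then show ?thesis using i by (simp add: growth_tableaux_def wt_map_upt size del: upt_Suc)
  qed
  show "int (\<Sum>i = 1..n. f i j) = wt (snd (growth_tableaux n m f)) j" if j: "j \<in> {1..m}"
  proof -
    obtain j' where "j = Suc j'" using j by (cases j) auto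
    then show ?thesis using j by (simp add: growth_tableaux_def wt_map_upt size sum.distrib del: upt_Suc)
  qed
qed

lemma growth_tableaux_reflect: "growth_tableaux m n (reflect f) = prod.swap (growth_tableaux n m f)"
  unfolding growth_tableaux_def by (simp add: growth_reflect del: upt_Suc)

section \<open>The inverse map\<close>

fun ungrowth_from_corner :: "nat list list \<Rightarrow> nat list list \<Rightarrow> nat \<Rightarrow> nat \<Rightarrow> nat \<Rightarrow> nat \<Rightarrow> nat list" where
  "ungrowth_from_corner P Q n m 0 b = Q ! (m - b)"
| "ungrowth_from_corner P Q n m (Suc a) 0 = P ! (n - Suc a)"
| "ungrowth_from_corner P Q n m (Suc a) (Suc b) =
     ungrow (ungrowth_from_corner P Q n m (Suc a) b) (ungrowth_from_corner P Q n m a (Suc b))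
       (ungrowth_from_corner P Q n m a b)"

definition ungrowth :: "nat list list \<Rightarrow> nat list list \<Rightarrow> nat \<Rightarrow> nat \<Rightarrow> nat \<Rightarrow> nat \<Rightarrow> nat list" where
  "ungrowth P Q n m i j = ungrowth_from_corner P Q n m (n - i) (m - j)"

definition unfill :: "nat \<Rightarrow> nat \<Rightarrow> nat list list \<Rightarrow> nat list list \<Rightarrow> filling" where
  "unfill n m P Q i j = (if i \<in> {1..n} \<and> j \<in> {1..m}
     then ungrow_entry (ungrowth P Q n m (i-1) j) (ungrowth P Q n m i (j-1)) (ungrowth P Q n m i j) else 0)"

lemma ungrowth_rec:
  assumes "0 < i" "i \<le> n" "0 < j" "j \<le> m"
  shows "ungrowth P Q n m (i-1) (j-1) = ungrow (ungrowth P Q n m (i-1) j) (ungrowth P Q n m i (j-1)) (ungrowth P Q n m i j)"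
proof -
  have "n - (i-1) = Suc (n - i)" "m - (j-1) = Suc (m - j)" using assms by auto
  then show ?thesis unfolding ungrowth_def by simp
qed

lemma ungrowth_top: "j \<le> m \<Longrightarrow> ungrowth P Q n m n j = Q ! j"
  by (simp add: ungrowth_def)

lemma ungrowth_right:
  assumes "i \<le> n" "P ! n = Q ! m"
  shows "ungrowth P Q n m i m = P ! i"
proof (cases "i = n")
  case False
  then have "n - i = Suc (n - Suc i)" "n - Suc (n - Suc i) = i" using assms(1) by auto
  then show ?thesis by (simp add: ungrowth_def)
qed (simp add: ungrowth_def assms(2))

context
  fixes P Q n m
  assumes PQ: "(P, Q) \<in> tableau_pairs d L n m"
begin

lemma tableau_pair_common_shape: "P ! n = Q ! m"
proof -
  have "length P = Suc n" "length Q = Suc m" "last P = last Q"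
    using PQ unfolding tableau_pairs_def shape_def by auto
  then show ?thesis by (metis diff_Suc_1 last_conv_nth list.size(3) nat.distinct(1))
qed

lemma ungrowth_prec:
  assumes "i \<le> n" "j \<le> m"
  shows "(0 < i \<longrightarrow> ungrowth P Q n m (i-1) j \<prec> ungrowth P Q n m i j) \<and>
         (0 < j \<longrightarrow> ungrowth P Q n m i (j-1) \<prec> ungrowth P Q n m i j)"
  using assms
proof (induction "(n - i) + (m - j)" arbitrary: i j rule: less_induct)
  case less
  let ?B = "ungrowth P Q n m"
  have P_prec: "P ! i \<prec> P ! Suc i" if "i < n" for i
    using PQ that unfolding tableau_pairs_def cyl_ssyt_def by auto
  have Q_prec: "Q ! j \<prec> Q ! Suc j" if "j < m" for j
    using PQ that unfolding tableau_pairs_def cyl_ssyt_def by auto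
  have "?B (i-1) j \<prec> ?B i j" if "0 < i"
  proof (cases "j = m")
    case True
    then show ?thesis
      using ungrowth_right[OF _ tableau_pair_common_shape] P_prec[of "i-1"] less.prems that by auto
  next
    case False
    then have "?B (i-1) (Suc j) \<prec> ?B i (Suc j)" "?B i j \<prec> ?B i (Suc j)"
      using less.hyps[of i "Suc j"] less.prems that by auto
    moreover have "?B (i-1) j = ungrow (?B (i-1) (Suc j)) (?B i j) (?B i (Suc j))"
      using ungrowth_rec[of i n "Suc j" m] less.prems False that by auto
    ultimately show ?thesis using ungrow_prec by simp
  qed
  moreover have "?B i (j-1) \<prec> ?B i j" if "0 < j"
  proof (cases "i = n")
    case True
    then show ?thesis using ungrowth_top Q_prec[of "j-1"] less.prems that by auto
  next
    case False
    then have "?B i j \<prec> ?B (Suc i) j" "?B (Suc i) (j-1) \<prec> ?B (Suc i) j"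
      using less.hyps[of "Suc i" j] less.prems that by auto
    moreover have "?B i (j-1) = ungrow (?B i j) (?B (Suc i) (j-1)) (?B (Suc i) j)"
      using ungrowth_rec[of "Suc i" n j m] less.prems False that by auto
    ultimately show ?thesis using ungrow_prec by simp
  qed
  ultimately show ?case by blast
qed

lemma ungrowth_0_left: "j \<le> m \<Longrightarrow> ungrowth P Q n m 0 j = replicate d 0"
proof (induction "m - j" arbitrary: j)
  case 0
  then have "j = m" by simp
  moreover have "P ! 0 = replicate d 0" using PQ unfolding tableau_pairs_def cyl_ssyt_def by auto
  ultimately show ?case using ungrowth_right[OF _ tableau_pair_common_shape] by simp
next
  case (Suc k)
  then have "ungrowth P Q n m 0 (Suc j) = replicate d 0" by simp
  moreover have "ungrowth P Q n m 0 j \<prec> ungrowth P Q n m 0 (Suc j)"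
    using ungrowth_prec[of 0 "Suc j"] Suc.hyps by simp
  ultimately show ?case by simp
qed

lemma ungrowth_0_right: "i \<le> n \<Longrightarrow> ungrowth P Q n m i 0 = replicate d 0"
proof (induction "n - i" arbitrary: i)
  case 0
  then have "i = n" by simp
  moreover have "Q ! 0 = replicate d 0" using PQ unfolding tableau_pairs_def cyl_ssyt_def by auto
  ultimately show ?case using ungrowth_top by simp
next
  case (Suc k)
  then have "ungrowth P Q n m (Suc i) 0 = replicate d 0" by simp
  moreover have "ungrowth P Q n m i 0 \<prec> ungrowth P Q n m (Suc i) 0"
    using ungrowth_prec[of "Suc i" 0] Suc.hyps by simp
  ultimately show ?case by simp
qed

lemma ungrowth_corner:
  assumes "0 < i" "i \<le> n" "0 < j" "j \<le> m"
  defines "B \<equiv> ungrowth P Q n m"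
  shows "B (i-1) (j-1) \<prec> B (i-1) j" "B (i-1) (j-1) \<prec> B i (j-1)"
    and "local_admissible (B (i-1) (j-1)) (B (i-1) j) (B i (j-1)) (unfill n m P Q i j) (B i j)"
    and "grow (B (i-1) (j-1)) (B (i-1) j) (B i (j-1)) (unfill n m P Q i j) = B i j"
proof -
  have prec: "B (i-1) j \<prec> B i j" "B i (j-1) \<prec> B i j"
    using ungrowth_prec[of i j] assms by auto
  have "B (i-1) (j-1) = ungrow (B (i-1) j) (B i (j-1)) (B i j)"
    "unfill n m P Q i j = ungrow_entry (B (i-1) j) (B i (j-1)) (B i j)"
    using ungrowth_rec[OF assms(1-4)] assms by (auto simp: unfill_def)
  then show "B (i-1) (j-1) \<prec> B (i-1) j" "B (i-1) (j-1) \<prec> B i (j-1)"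
    "local_admissible (B (i-1) (j-1)) (B (i-1) j) (B i (j-1)) (unfill n m P Q i j) (B i j)"
    "grow (B (i-1) (j-1)) (B (i-1) j) (B i (j-1)) (unfill n m P Q i j) = B i j"
    using ungrow_prec[OF prec] local_admissible_ungrow[OF prec] grow_ungrow[OF prec] by simp_all
qed

lemma growth_unfill: "i \<le> n \<Longrightarrow> j \<le> m \<Longrightarrow> growth (unfill n m P Q) i j = ungrowth P Q n m i j"
proof (induction "unfill n m P Q" i j rule: growth.induct)
  case (3 i j)
  then show ?case using ungrowth_corner(4)[of "Suc i" "Suc j"] by simp
qed (simp_all add: ungrowth_0_left ungrowth_0_right)

lemma unfill_admissible: "unfill n m P Q \<in> admissible_fillings d L n m"
proof -
  have "is_filling n m (unfill n m P Q)" unfolding is_filling_def unfill_def by auto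
  moreover have "corner_admissible (unfill n m P Q) a b" if "a \<in> {1..n}" "b \<in> {1..m}" for a b
    using that ungrowth_corner(3)[of a b] growth_unfill[of "a-1" "b-1"] growth_unfill[of "a-1" b]
      growth_unfill[of a "b-1"] growth_unfill[of a b]
    unfolding corner_admissible_def by auto
  ultimately show ?thesis using admissible_fillings_iff by blast
qed

lemma growth_tableaux_unfill: "growth_tableaux n m (unfill n m P Q) = (P, Q)"
proof -
  have "length P = Suc n" "length Q = Suc m" using PQ unfolding tableau_pairs_def by auto
  then show ?thesis
    unfolding growth_tableaux_def
    by (auto intro!: nth_equalityI simp: nth_map_upt_Suc growth_unfill ungrowth_top
        ungrowth_right[OF _ tableau_pair_common_shape] simp del: upt_Suc)
qed

end

lemma
  assumes "corners_admissible f p q" "0 < i" "i \<le> p" "0 < j" "j \<le> q"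
  shows ungrow_growth: "ungrow (growth f (i-1) j) (growth f i (j-1)) (growth f i j) = growth f (i-1) (j-1)"
    and ungrow_entry_growth: "ungrow_entry (growth f (i-1) j) (growth f i (j-1)) (growth f i j) = f i j"
proof -
  have "corners_admissible f (i-1) j" "corners_admissible f i (j-1)" using assms by auto
  then have prec: "growth f (i-1) (j-1) \<prec> growth f (i-1) j" "growth f (i-1) (j-1) \<prec> growth f i (j-1)"
    using growth_prec[of "i-1" j f] growth_prec[of i "j-1" f] assms by auto
  have "local_admissible (growth f (i-1) (j-1)) (growth f (i-1) j) (growth f i (j-1)) (f i j) (growth f i j)"
    using assms unfolding corner_admissible_def by auto
  then show "ungrow (growth f (i-1) j) (growth f i (j-1)) (growth f i j) = growth f (i-1) (j-1)"
    "ungrow_entry (growth f (i-1) j) (growth f i (j-1)) (growth f i j) = f i j"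
    using ungrow_grow[OF prec] ungrow_entry_grow[OF prec] growth_rec[of i j f] assms by auto
qed

lemma ungrowth_growth_tableaux:
  assumes "f \<in> admissible_fillings d L n m" "i \<le> n" "j \<le> m"
  shows "ungrowth (fst (growth_tableaux n m f)) (snd (growth_tableaux n m f)) n m i j = growth f i j"
  using assms(2,3)
proof (induction "(n - i) + (m - j)" arbitrary: i j rule: less_induct)
  case less
  let ?B = "ungrowth (fst (growth_tableaux n m f)) (snd (growth_tableaux n m f)) n m"
  have adm: "corners_admissible f n m" using assms(1) admissible_fillings_iff by blast
  show ?case
  proof (cases "i = n \<or> j = m")
    case True
    then show ?thesis using less.prems
      by (auto simp: growth_tableaux_def ungrowth_top ungrowth_right nth_map_upt_Suc simp del: upt_Suc)
  next
    case False
    then have "?B i j = ungrow (?B i (Suc j)) (?B (Suc i) j) (?B (Suc i) (Suc j))"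
      using ungrowth_rec[of "Suc i" n "Suc j" m] less.prems by auto
    also have "\<dots> = ungrow (growth f i (Suc j)) (growth f (Suc i) j) (growth f (Suc i) (Suc j))"
      using less.hyps less.prems False by auto
    also have "\<dots> = growth f i j"
      using ungrow_growth[OF adm, of "Suc i" "Suc j"] less.prems False by auto
    finally show ?thesis .
  qed
qed

lemma unfill_growth_tableaux:
  assumes "f \<in> admissible_fillings d L n m"
  shows "unfill n m (fst (growth_tableaux n m f)) (snd (growth_tableaux n m f)) = f"
proof (intro ext)
  fix i j
  have adm: "is_filling n m f" "corners_admissible f n m" using assms admissible_fillings_iff by auto
  show "unfill n m (fst (growth_tableaux n m f)) (snd (growth_tableaux n m f)) i j = f i j"
  proof (cases "i \<in> {1..n} \<and> j \<in> {1..m}")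
    case True
    then show ?thesis
      using ungrow_entry_growth[OF adm(2), of i j] ungrowth_growth_tableaux[OF assms, of "i-1" j]
        ungrowth_growth_tableaux[OF assms, of i "j-1"] ungrowth_growth_tableaux[OF assms, of i j]
      by (auto simp: unfill_def)
  next
    case False
    then show ?thesis using adm(1) unfolding unfill_def is_filling_def by auto
  qed
qed

lemma bij_betw_growth_tableaux:
  "bij_betw (growth_tableaux n m) (admissible_fillings d L n m) (tableau_pairs d L n m)"
proof (rule bij_betw_byWitness[where f' = "\<lambda>(P, Q). unfill n m P Q"])
  show "\<forall>f\<in>admissible_fillings d L n m. (\<lambda>(P, Q). unfill n m P Q) (growth_tableaux n m f) = f"
    using unfill_growth_tableaux by (simp add: case_prod_beta)
  show "\<forall>PQ\<in>tableau_pairs d L n m. growth_tableaux n m ((\<lambda>(P, Q). unfill n m P Q) PQ) = PQ"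
    using growth_tableaux_unfill by auto
  show "growth_tableaux n m ` admissible_fillings d L n m \<subseteq> tableau_pairs d L n m"
    using growth_tableaux_in_tableau_pairs by auto
  show "(\<lambda>(P, Q). unfill n m P Q) ` tableau_pairs d L n m \<subseteq> admissible_fillings d L n m"
    using unfill_admissible by auto
qed

end

theorem corollary4p2:
  fixes d L :: nat
  assumes "0 < d" and "0 < L"
  shows "\<exists>\<Phi> :: nat \<Rightarrow> nat \<Rightarrow> filling \<Rightarrow> nat list list \<times> nat list list.
    \<forall>n m. bij_betw (\<Phi> n m) (admissible_fillings d L n m) (tableau_pairs d L n m) \<and>
      (\<forall>f \<in> admissible_fillings d L n m.
         (\<forall>i \<in> {1..n}. int (\<Sum>j = 1..m. f i j) = wt (fst (\<Phi> n m f)) i) \<and>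
         (\<forall>j \<in> {1..m}. int (\<Sum>i = 1..n. f i j) = wt (snd (\<Phi> n m f)) j) \<and>
         \<Phi> m n (reflect f) = prod.swap (\<Phi> n m f))"
proof -
  interpret cylindric_growth d L
    by unfold_locales (rule assms(1))
  show ?thesis
    using bij_betw_growth_tableaux growth_tableaux_weights growth_tableaux_reflect
    by (intro exI[of _ growth_tableaux]) blast
qed

end
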